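(* Let $\lambda$ be a real number with $\lambda\neq 0$ and $\lambda\ne -1$, and let $x$ be a real number with $0<|x|<1/|\lambda|$. Then \[ e_{\lambda}(x,\ 1|2)=\frac{1}{1+\lambda}\cdot\frac{1}{x}\int_{0}^{x}\frac{1}{t}\big(e_{\lambda}(t)-1\big)\,dt+\frac{1}{x}\,\frac{\lambda}{(1+\lambda)^{2}}\big(e_{\lambda}(x)-1\big)+\Big(\frac{\lambda}{1+\lambda}\Big)^{2}e_{\lambda}(x). \]
   Context: For nonzero real $\lambda$: $(1)_{0,\lambda}=1$, $(1)_{n,\lambda}=1(1-\lambda)(1-2\lambda)\cdots(1-(n-1)\lambda)$ for $n\ge1$. The degenerate exponential is $e_\lambda(t)=(1+\lambda t)^{1/\lambda}=\sum_{n\ge0}(1)_{n,\lambda}t^n/n!$ for $|\lambda t|<1$. The degenerate polyexponential function is $e_{\lambda}(x,\ \delta|k)=\sum_{n=0}^{\infty}\frac{(1)_{n,\lambda}}{n!\,(n+\delta)^{k}}x^{n}$; in particular $e_\lambda(x,1|2)=\sum_{n\ge0}\frac{(1)_{n,\lambda}}{n!(n+1)^2}x^n$. The integrand $(e_\lambda(t)-1)/t$ is extended continuously at $t=0$. *)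

theory Defs
  imports "HOL-Analysis.Analysis"
begin

definition deg_ff :: "real \<Rightarrow> nat \<Rightarrow> real" where
  "deg_ff lam n = (\<Prod>k<n. 1 - real k * lam)"

text \<open>Degenerate exponential e_lambda(t) = (1 + lambda t)^(1/lambda), used for |lambda t| < 1.\<close>
definition deg_exp :: "real \<Rightarrow> real \<Rightarrow> real" where
  "deg_exp lam t = (1 + lam * t) powr (1 / lam)"

definition deg_polyexp :: "real \<Rightarrow> real \<Rightarrow> real \<Rightarrow> nat \<Rightarrow> real" where
  "deg_polyexp lam x \<delta> k = (\<Sum>n. deg_ff lam n / (fact n * (real n + \<delta>) ^ k) * x ^ n)"

text \<open>Integrand (e_lambda(t) - 1)/t, continuously extended by its limit 1 at t = 0.\<close>
definition deg_integrand :: "real \<Rightarrow> real \<Rightarrow> real" where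
  "deg_integrand lam t = (if t = 0 then 1 else (deg_exp lam t - 1) / t)"

end

theory Submission
  imports Defs
begin

(* Let a_n = (1)_{n,lambda} / n! be the Taylor coefficients of e_lambda. The recurrence
   a_{n+1} = (1 + lambda) a_n / (n + 1) - lambda a_n, after shifting the summation index in
   e_lambda(x, 0|k) = sum_n a_n x^n / n^k, gives

     e_lambda(x, 0|k) - [k = 0] = x ((1 + lambda) e_lambda(x, 1|k+1) - lambda e_lambda(x, 1|k)).

   For k = 0 the left side is e_lambda(x) - 1; for k = 1 it is, by termwise integration,
   the integral of (e_lambda(t) - 1)/t from 0 to x. Eliminating e_lambda(x, 1|1) between these
   two instances yields the formula. *)

definition deg_coeff :: "real \<Rightarrow> nat \<Rightarrow> real" where
  "deg_coeff lam n = deg_ff lam n / fact n"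

lemma deg_coeff_0 [simp]: "deg_coeff lam 0 = 1"
  by (simp add: deg_coeff_def deg_ff_def)

lemma deg_coeff_Suc:
  "deg_coeff lam (Suc n) = (1 + lam) * deg_coeff lam n / (real n + 1) - lam * deg_coeff lam n"
proof -
  have "deg_coeff lam (Suc n) = deg_coeff lam n * (1 - real n * lam) / (real n + 1)"
    by (simp add: deg_coeff_def deg_ff_def lessThan_Suc field_simps)
  then show ?thesis
    by (simp add: divide_simps) (simp add: algebra_simps)
qed

lemma gbinomial_inverse_mult_power:
  assumes "lam \<noteq> 0"
  shows "((1 / lam) gchoose n) * lam ^ n = deg_coeff lam n"
proof -
  have "((1 / lam) gchoose n) * lam ^ n = (\<Prod>i<n. (1 / lam - real i) * lam) / fact n"
    by (simp add: gbinomial_prod_rev prod.distrib atLeast0LessThan)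
  also have "\<dots> = deg_coeff lam n"
    using assms by (simp add: deg_coeff_def deg_ff_def algebra_simps)
  finally show ?thesis .
qed

lemma deg_exp_sums:
  assumes "lam \<noteq> 0" "\<bar>t\<bar> < 1 / \<bar>lam\<bar>"
  shows "(\<lambda>n. deg_coeff lam n * t ^ n) sums deg_exp lam t"
proof -
  have "\<bar>lam * t\<bar> < 1"
    using assms by (simp add: abs_mult field_simps)
  from gen_binomial_real[OF this, of "1 / lam"] show ?thesis
    by (simp add: deg_exp_def power_mult_distrib mult.assoc[symmetric]
        gbinomial_inverse_mult_power[OF assms(1)])
qed

lemma conv_radius_deg_coeff:
  assumes "lam \<noteq> 0"
  shows "ereal (1 / \<bar>lam\<bar>) \<le> conv_radius (deg_coeff lam)"
  using deg_exp_sums[OF assms] by (subst le_conv_radius_iff[where \<xi> = 0]) (auto simp: sums_iff)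

lemma deg_polyexp_eq_suminf:
  "deg_polyexp lam x \<delta> k = (\<Sum>n. deg_coeff lam n / (real n + \<delta>) ^ k * x ^ n)"
  by (simp add: deg_polyexp_def deg_coeff_def divide_divide_eq_left)

lemma summable_deg_polyexp:
  assumes "lam \<noteq> 0" "\<bar>x\<bar> < 1 / \<bar>lam\<bar>"
  shows "summable (\<lambda>n. deg_coeff lam n / (real n + \<delta>) ^ k * x ^ n)"
proof (rule summable_comparison_test)
  show "summable (\<lambda>n. norm (deg_coeff lam n * x ^ n))"
    using assms
    by (intro abs_summable_in_conv_radius less_le_trans[OF _ conv_radius_deg_coeff]) simp_all
  show "\<exists>N. \<forall>n\<ge>N. norm (deg_coeff lam n / (real n + \<delta>) ^ k * x ^ n) \<le> norm (deg_coeff lam n * x ^ n)"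
  proof (intro exI allI impI)
    fix n assume "n \<ge> nat \<lceil>1 - \<delta>\<rceil>"
    then have "1 \<le> real n + \<delta>" by linarith
    then have "\<bar>deg_coeff lam n / (real n + \<delta>) ^ k\<bar> \<le> \<bar>deg_coeff lam n\<bar>"
      by (simp add: abs_div divide_le_eq mult_le_cancel_left1 one_le_power)
    then show "norm (deg_coeff lam n / (real n + \<delta>) ^ k * x ^ n) \<le> norm (deg_coeff lam n * x ^ n)"
      unfolding real_norm_def abs_mult by (rule mult_right_mono) simp_all
  qed
qed

lemma deg_polyexp_sums:
  assumes "lam \<noteq> 0" "\<bar>x\<bar> < 1 / \<bar>lam\<bar>"
  shows "(\<lambda>n. deg_coeff lam n / (real n + \<delta>) ^ k * x ^ n) sums deg_polyexp lam x \<delta> k"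
  using summable_deg_polyexp[OF assms] by (simp add: deg_polyexp_eq_suminf summable_sums)

lemma deg_polyexp_order_0:
  assumes "lam \<noteq> 0" "\<bar>x\<bar> < 1 / \<bar>lam\<bar>"
  shows "deg_polyexp lam x \<delta> 0 = deg_exp lam x"
  using deg_polyexp_sums[OF assms, of \<delta> 0] deg_exp_sums[OF assms] by (simp add: sums_unique2)

lemma deg_polyexp_shift_recurrence:
  assumes "lam \<noteq> 0" "\<bar>x\<bar> < 1 / \<bar>lam\<bar>"
  shows "deg_polyexp lam x 0 k - of_bool (k = 0)
    = x * ((1 + lam) * deg_polyexp lam x 1 (Suc k) - lam * deg_polyexp lam x 1 k)"
proof -
  define d where "d \<delta> j n = deg_coeff lam n / (real n + \<delta>) ^ j * x ^ n" for \<delta> j n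
  have "(\<lambda>n. x * ((1 + lam) * d 1 (Suc k) n - lam * d 1 k n))
      sums (x * ((1 + lam) * deg_polyexp lam x 1 (Suc k) - lam * deg_polyexp lam x 1 k))"
    unfolding d_def by (intro sums_mult sums_diff deg_polyexp_sums assms)
  moreover have "x * ((1 + lam) * d 1 (Suc k) n - lam * d 1 k n) = d 0 k (Suc n)" for n
    by (simp add: d_def deg_coeff_Suc divide_simps) (simp add: algebra_simps)
  ultimately have "(\<lambda>n. d 0 k (Suc n))
      sums (x * ((1 + lam) * deg_polyexp lam x 1 (Suc k) - lam * deg_polyexp lam x 1 k))"
    by simp
  \<comment> \<open>the dropped term d 0 k 0 = 1 / 0 ^ k is 1 for k = 0 and 0 (division by zero) otherwise\<close>
  then have "d 0 k sums (x * ((1 + lam) * deg_polyexp lam x 1 (Suc k) - lam * deg_polyexp lam x 1 k)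
      + of_bool (k = 0))"
    by (subst (asm) sums_Suc_iff) (cases k; simp add: d_def)
  moreover have "d 0 k sums deg_polyexp lam x 0 k"
    unfolding d_def by (rule deg_polyexp_sums[OF assms])
  ultimately show ?thesis
    using sums_unique2 by fastforce
qed

lemma deg_integrand_sums:
  assumes "lam \<noteq> 0" "\<bar>t\<bar> < 1 / \<bar>lam\<bar>"
  shows "(\<lambda>n. deg_coeff lam (Suc n) * t ^ n) sums deg_integrand lam t"
proof (cases "t = 0")
  case True
  then show ?thesis
    using powser_sums_zero[of "\<lambda>n. deg_coeff lam (Suc n)"]
    by (simp add: deg_integrand_def deg_coeff_Suc)
next
  case False
  have "(\<lambda>n. deg_coeff lam (Suc n) * t ^ Suc n) sums (deg_exp lam t - 1)"
    using deg_exp_sums[OF assms] by (subst sums_Suc_iff) simp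
  then have "(\<lambda>n. deg_coeff lam (Suc n) * t ^ Suc n / t) sums ((deg_exp lam t - 1) / t)"
    by (rule sums_divide)
  then show ?thesis
    using False by (simp add: deg_integrand_def)
qed

lemma has_field_derivative_deg_polyexp:
  assumes "lam \<noteq> 0" "\<bar>t\<bar> < 1 / \<bar>lam\<bar>"
  shows "((\<lambda>s. deg_polyexp lam s 0 1) has_field_derivative deg_integrand lam t) (at t within A)"
proof -
  define c where "c n = deg_coeff lam n / real n" for n
  have radius: "ereal (1 / \<bar>lam\<bar>) \<le> conv_radius c"
    using summable_deg_polyexp[OF assms(1), of _ 0 1]
    by (subst le_conv_radius_iff[where \<xi> = 0]) (simp add: c_def)
  then have "((\<lambda>s. \<Sum>n. c n * s ^ n) has_field_derivative (\<Sum>n. diffs c n * t ^ n)) (at t within A)"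
    using assms(2) by (intro has_field_derivative_powser less_le_trans[OF _ radius]) simp
  moreover have "diffs c = (\<lambda>n. deg_coeff lam (Suc n))"
    by (simp add: diffs_def c_def fun_eq_iff)
  ultimately show ?thesis
    using deg_integrand_sums[OF assms] by (simp add: deg_polyexp_eq_suminf c_def sums_iff)
qed

lemma continuous_on_deg_integrand:
  assumes "lam \<noteq> 0" "r < 1 / \<bar>lam\<bar>"
  shows "continuous_on (cball 0 r) (deg_integrand lam)"
proof (rule powser_continuous_sums)
  show "ereal r < conv_radius (\<lambda>n. deg_coeff lam (Suc n))"
    using conv_radius_shift[of "deg_coeff lam" 1] assms(2)
    by (simp add: less_le_trans[OF _ conv_radius_deg_coeff[OF assms(1)]])
  show "(\<lambda>n. deg_coeff lam (Suc n) * (t - 0) ^ n) sums deg_integrand lam t" if "t \<in> cball 0 r" for t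
    using that assms deg_integrand_sums[OF assms(1), of t] by simp
qed

lemma interval_integral_deg_integrand:
  assumes "lam \<noteq> 0" "\<bar>x\<bar> < 1 / \<bar>lam\<bar>"
  shows "(LBINT t=ereal 0..ereal x. deg_integrand lam t) = deg_polyexp lam x 0 1"
proof -
  have "(LBINT t=ereal 0..ereal x. deg_integrand lam t) = deg_polyexp lam x 0 1 - deg_polyexp lam 0 0 1"
  proof (rule interval_integral_FTC_finite)
    show "continuous_on {min 0 x..max 0 x} (deg_integrand lam)"
      by (rule continuous_on_subset[OF continuous_on_deg_integrand[OF assms]]) auto
    show "((\<lambda>s. deg_polyexp lam s 0 1) has_vector_derivative deg_integrand lam t)
        (at t within {min 0 x..max 0 x})" if "min 0 x \<le> t" "t \<le> max 0 x" for t
      unfolding has_real_derivative_iff_has_vector_derivative[symmetric]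
      by (rule has_field_derivative_deg_polyexp[OF assms(1)]) (use that assms(2) in auto)
  qed
  moreover have "deg_polyexp lam 0 0 1 = 0"
    using powser_zero[of "\<lambda>n. deg_coeff lam n / real n"] by (simp add: deg_polyexp_eq_suminf)
  ultimately show ?thesis
    by simp
qed

theorem lemma2:
  fixes lam x :: real
  assumes "lam \<noteq> 0" and "lam \<noteq> -1"
    and "0 < \<bar>x\<bar>" and "\<bar>x\<bar> < 1 / \<bar>lam\<bar>"
  shows "deg_polyexp lam x 1 2 =
      1 / (1 + lam) * (1 / x) * (LBINT t=ereal 0..ereal x. deg_integrand lam t)
      + (1 / x) * (lam / (1 + lam)^2) * (deg_exp lam x - 1)
      + (lam / (1 + lam))^2 * deg_exp lam x"
proof -
  note inside = assms(1,4)
  have "x \<noteq> 0" "1 + lam \<noteq> 0"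
    using assms(2,3) by auto
  have order_0: "deg_exp lam x - 1 = x * ((1 + lam) * deg_polyexp lam x 1 1 - lam * deg_exp lam x)"
    using deg_polyexp_shift_recurrence[OF inside, of 0] by (simp add: deg_polyexp_order_0[OF inside])
  have order_1: "deg_polyexp lam x 0 1
      = x * ((1 + lam) * deg_polyexp lam x 1 2 - lam * deg_polyexp lam x 1 1)"
    using deg_polyexp_shift_recurrence[OF inside, of 1] by (simp add: numeral_2_eq_2)
  show ?thesis
    unfolding interval_integral_deg_integrand[OF inside] order_0 order_1
    using \<open>x \<noteq> 0\<close> \<open>1 + lam \<noteq> 0\<close>
    by (simp add: divide_simps power2_eq_square) (simp add: algebra_simps)
qed

end
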